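(* For $\alpha\ge0$, let \[A_\alpha:=\begin{pmatrix}1&0&0\\0&0&\alpha\\0&0&0\end{pmatrix}\in M_3(\mathbb{C}).\] Then $\psi(A_\alpha)\ge\pi/2$ for all $\alpha>0$, and $\psi(A_0)=1$. Consequently the map $A\mapsto\psi(A)$ is discontinuous at $A_0$.
   Context: $M_3(\mathbb{C})$ denotes the complex $3\times3$ matrices acting on $\mathbb{C}^3$ with the Euclidean inner product and operator norm. For $A\in M_3(\mathbb{C})$, the numerical range is $W(A):=\{\langle Ax,x\rangle: \|x\|=1\}$, and the Crouzeix ratio is $\psi(A):=\sup\{\|p(A)\|: p \text{ a polynomial with } |p|\le 1 \text{ on } W(A)\}$. *)

theory Defs
  imports "HOL-Analysis.Analysis" "HOL-Computational_Algebra.Polynomial"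
begin

type_synonym cmat3 = "complex^3^3"

definition cinner3 :: "complex^3 \<Rightarrow> complex^3 \<Rightarrow> complex" where
  "cinner3 x y = (\<Sum>i\<in>UNIV. x $ i * cnj (y $ i))"

definition num_range :: "cmat3 \<Rightarrow> complex set" where
  "num_range A = {cinner3 (A *v x) x | x. norm x = 1}"

definition op_norm :: "cmat3 \<Rightarrow> real" where
  "op_norm A = onorm (\<lambda>x. A *v x)"

definition mat_pow :: "cmat3 \<Rightarrow> nat \<Rightarrow> cmat3" where
  "mat_pow A n = ((\<lambda>M. A ** M) ^^ n) (mat 1)"

definition poly_mat :: "complex poly \<Rightarrow> cmat3 \<Rightarrow> cmat3" where
  "poly_mat p A = (\<Sum>i\<le>degree p. (\<chi> r c. coeff p i * (mat_pow A i) $ r $ c))"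

text \<open>Crouzeix ratio, as an extended real (supremum may a priori be infinite).\<close>
definition crouzeix_ratio :: "cmat3 \<Rightarrow> ereal" where
  "crouzeix_ratio A = (SUP p \<in> {p. \<forall>z\<in>num_range A. cmod (poly p z) \<le> 1}. ereal (op_norm (poly_mat p A)))"

definition A_alpha :: "real \<Rightarrow> cmat3" where
  "A_alpha a = vector [vector [1, 0, 0], vector [0, 0, complex_of_real a], vector [0, 0, 0]]"

end

theory Submission
  imports Defs
begin

(* The numerical range of A_alpha lies in the truncated strip |Im z| <= alpha/2, |z| <= 1 + alpha/2,
   and the (2,3) entry of p(A_alpha) is alpha p'(0).  Since tanh z = (e^(2z) - 1)/(e^(2z) + 1) maps
   the strip |Im z| < pi/4 into the unit disc with derivative 1 at 0, polynomial approximations of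
   tanh (2h z / alpha) give ||p(A_alpha)|| >= 2h (1 - eps) for every h < pi/4.  The approximations
   replace e^(2z) by a Taylor polynomial E with Re E >= 0 and 1/(1 + E) by a Neumann series.
   For alpha = 0, p(A_0) = diag(p(1), p(0), p(0)) and 0, 1 lie in W(A_0), so psi(A_0) = 1. *)

definition truncated_strip :: "real \<Rightarrow> real \<Rightarrow> complex set" where
  "truncated_strip h \<rho> = {z. \<bar>Im z\<bar> \<le> h \<and> cmod z \<le> \<rho>}"

lemma scaled_mem_truncated_strip:
  assumes "z \<in> truncated_strip h \<rho>" "0 \<le> \<beta>"
  shows "of_real \<beta> * z \<in> truncated_strip (\<beta> * h) (\<beta> * \<rho>)"
  using assms by (auto simp: truncated_strip_def abs_mult norm_mult intro: mult_left_mono)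

lemma uniform_limit_exp_partial_sums:
  "uniform_limit (cball 0 R) (\<lambda>N z. \<Sum>k<N. z ^ k /\<^sub>R fact k) (exp :: complex \<Rightarrow> complex) sequentially"
proof -
  have exp_eq: "exp = (\<lambda>z::complex. \<Sum>k. z ^ k /\<^sub>R fact k)"
    by (rule ext) (rule sums_unique[OF exp_converges])
  show ?thesis
    unfolding exp_eq
  proof (rule Weierstrass_m_test)
    show "norm (z ^ n /\<^sub>R fact n) \<le> R ^ n /\<^sub>R fact n" if "z \<in> cball 0 R" for n and z :: complex
      using that by (simp add: norm_power divide_right_mono power_mono)
    show "summable (\<lambda>n. R ^ n /\<^sub>R fact n)"
      using exp_converges[of R] by (rule sums_summable)
  qed
qed

lemma Re_exp_ge_on_truncated_strip:
  assumes "z \<in> truncated_strip h \<rho>" "h \<le> pi/4"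
  shows "exp (-2*\<rho>) * cos (2*h) \<le> Re (exp (2*z))"
proof -
  have z: "\<bar>Im z\<bar> \<le> h" "cmod z \<le> \<rho>"
    using assms(1) by (auto simp: truncated_strip_def)
  have "exp (-2*\<rho>) \<le> exp (2 * Re z)"
    using abs_Re_le_cmod[of z] z(2) by simp
  moreover have "cos (2*h) \<le> cos (2 * Im z)"
    using cos_monotone_0_pi_le[of "\<bar>2 * Im z\<bar>" "2*h"] z(1) assms(2) by simp
  moreover have "0 \<le> cos (2*h)"
    using z(1) assms(2) by (intro cos_ge_zero) auto
  ultimately show ?thesis
    by (simp add: Re_exp mult_mono)
qed

lemma norm_diff_one_le_norm_add_one:
  fixes P :: complex
  assumes "0 \<le> Re P"
  shows "cmod (P - 1) \<le> cmod (P + 1)"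
proof -
  have "cmod (P - 1) ^ 2 \<le> cmod (P + 1) ^ 2"
    using assms unfolding cmod_power2 by (simp add: power2_eq_square algebra_simps)
  then show ?thesis
    by (rule power2_le_imp_le) simp
qed

lemma norm_one_minus_scaled_sq_le:
  fixes v :: complex
  assumes "1 \<le> Re v" "cmod v \<le> M"
  shows "cmod (1 - of_real (1 / M^2) * v) ^ 2 \<le> 1 - 1 / M^2"
proof -
  define c where "c = 1 / M^2"
  have "0 < M"
    using assms complex_Re_le_cmod[of v] by linarith
  then have "0 < c" "c * M^2 = 1"
    by (auto simp: c_def)
  have "cmod (1 - of_real c * v) ^ 2 = 1 - 2 * c * Re v + c^2 * (cmod v)^2"
    unfolding cmod_power2 by (simp add: power2_eq_square algebra_simps)
  also have "c^2 * (cmod v)^2 \<le> c^2 * M^2"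
    using assms(2) by (intro mult_left_mono power_mono) auto
  also have "c^2 * M^2 = c"
    using \<open>c * M^2 = 1\<close> by (simp add: power2_eq_square)
  finally have "cmod (1 - of_real c * v) ^ 2 \<le> 1 - 2 * c * Re v + c"
    by simp
  moreover have "c \<le> c * Re v"
    using assms(1) \<open>0 < c\<close> by simp
  ultimately show ?thesis
    unfolding c_def[symmetric] by simp
qed

(* With q = 1 - c (1 + P), the Neumann sum c (q^0 + ... + q^(K-1)) approximates c / (1 - q) = 1 / (1 + P),
   so the expression below is (P - 1)/(P + 1) (1 - q^K); the choice c = 1/M^2 makes |q| <= sqrt (1 - c). *)
lemma cayley_neumann_bound:
  fixes P :: complex
  assumes "0 \<le> Re P" "cmod (1 + P) \<le> M"
  defines "c \<equiv> 1 / M^2"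
  shows "cmod ((P - 1) * of_real c * (\<Sum>m<K. (1 - of_real c * (1 + P)) ^ m)) \<le> 1 + sqrt (1 - c) ^ K"
proof -
  define v where "v = 1 + P"
  define q where "q = 1 - of_real c * v"
  have "v \<noteq> 0"
    using assms(1) by (auto simp: v_def complex_eq_iff)
  have "cmod q ^ 2 \<le> 1 - c"
    unfolding q_def c_def by (rule norm_one_minus_scaled_sq_le) (use assms in \<open>auto simp: v_def\<close>)
  then have "cmod q \<le> sqrt (1 - c)"
    by (simp add: real_le_rsqrt)
  have "of_real c * (\<Sum>m<K. q ^ m) * v = 1 - q ^ K"
    using one_diff_power_eq[of q K] by (simp add: q_def mult_ac)
  then have "cmod ((P - 1) * of_real c * (\<Sum>m<K. q ^ m)) * cmod v = cmod (P - 1) * cmod (1 - q ^ K)"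
    by (metis mult.assoc norm_mult)
  also have "\<dots> \<le> cmod v * (1 + sqrt (1 - c) ^ K)"
  proof (rule mult_mono)
    show "cmod (P - 1) \<le> cmod v"
      using norm_diff_one_le_norm_add_one[OF assms(1)] by (simp add: v_def add.commute)
    have "cmod (1 - q ^ K) \<le> 1 + cmod q ^ K"
      using norm_triangle_ineq4[of 1 "q ^ K"] by (simp add: norm_power)
    also have "\<dots> \<le> 1 + sqrt (1 - c) ^ K"
      using \<open>cmod q \<le> sqrt (1 - c)\<close> by (simp add: power_mono)
    finally show "cmod (1 - q ^ K) \<le> 1 + sqrt (1 - c) ^ K" .
  qed auto
  finally show ?thesis
    using \<open>v \<noteq> 0\<close> by (simp add: q_def v_def mult.commute)
qed

lemma coeff_mult_1: "coeff (p * q) 1 = coeff p 0 * coeff q 1 + coeff p 1 * coeff q 0"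
  by (simp add: coeff_mult atMost_Suc add.commute)

lemma coeff_1_cayley_neumann:
  fixes E :: "complex poly"
  assumes "poly E 0 = 1"
  shows "coeff ((E - 1) * ([:of_real c:] * (\<Sum>m<K. (1 - [:of_real c:] * (1 + E)) ^ m))) 1
           = coeff E 1 * of_real ((1 - (1 - 2*c) ^ K) / 2)"
proof -
  define G where "G = [:of_real c:] * (\<Sum>m<K. (1 - [:of_real c:] * (1 + E)) ^ m)"
  have "poly G 0 = of_real (c * (\<Sum>m<K. (1 - 2*c) ^ m))"
    using assms by (simp add: G_def poly_sum mult.commute)
  also have "\<dots> = of_real ((1 - (1 - 2*c) ^ K) / 2)"
    using one_diff_power_eq[of "1 - 2*c" K] by simp
  finally show ?thesis
    unfolding G_def[symmetric] coeff_mult_1 using assms by (simp add: poly_0_coeff_0)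
qed

lemma one_minus_le_divide_one_plus:
  fixes x y \<epsilon> :: real
  assumes "0 \<le> x" "y \<le> x" "2 * x \<le> \<epsilon>"
  shows "1 - \<epsilon> \<le> (1 - y) / (1 + x)"
proof -
  have "(1 - \<epsilon>) * (1 + x) \<le> (1 - 2 * x) * (1 + x)"
    using assms by (intro mult_right_mono) auto
  also have "\<dots> = 1 - x - 2 * x^2"
    by (simp add: algebra_simps power2_eq_square)
  also have "\<dots> \<le> 1 - y"
    using assms zero_le_power2[of x] by linarith
  finally show ?thesis
    using assms(1) by (simp add: le_divide_eq add_pos_nonneg)
qed

lemma cayley_neumann_poly:
  fixes E :: "complex poly"
  assumes E_0: "poly E 0 = 1"
    and Re_E: "\<And>z. z \<in> S \<Longrightarrow> 0 \<le> Re (poly E z)"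
    and norm_E: "\<And>z. z \<in> S \<Longrightarrow> cmod (1 + poly E z) \<le> M"
    and "2 \<le> M" "0 < \<epsilon>"
  shows "\<exists>q. (\<forall>z\<in>S. cmod (poly q z) \<le> 1) \<and> (1 - \<epsilon>) * cmod (coeff E 1) / 2 \<le> cmod (coeff q 1)"
proof -
  define c where "c = 1 / M^2"
  define \<theta> where "\<theta> = sqrt (1 - c)"
  have "0 < c" "c \<le> 1/4"
    using \<open>2 \<le> M\<close> power_mono[of 2 M 2] by (auto simp: c_def field_simps)
  then have "0 \<le> \<theta>" "\<theta> < 1" "0 \<le> 1 - 2*c"
    by (auto simp: \<theta>_def)
  have "1 - 2*c \<le> \<theta>"
    unfolding \<theta>_def using \<open>0 < c\<close> \<open>c \<le> 1/4\<close>
    by (intro real_le_rsqrt) (simp add: power2_eq_square algebra_simps)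
  obtain K where "\<theta> ^ K < \<epsilon> / 2"
    using real_arch_pow_inv \<open>\<theta> < 1\<close> \<open>0 < \<epsilon>\<close> by (metis half_gt_zero)
  have "0 < 1 + \<theta> ^ K"
    using \<open>0 \<le> \<theta>\<close> by (simp add: add_pos_nonneg)
  define G where "G = [:of_real c:] * (\<Sum>m<K. (1 - [:of_real c:] * (1 + E)) ^ m)"
  define q where "q = smult (of_real (1 / (1 + \<theta> ^ K))) ((E - 1) * G)"
  have "cmod (poly q z) \<le> 1" if "z \<in> S" for z
  proof -
    have "cmod (poly ((E - 1) * G) z) \<le> 1 + \<theta> ^ K"
      using cayley_neumann_bound[OF Re_E[OF that] norm_E[OF that], of K]
      by (simp add: G_def poly_sum c_def \<theta>_def mult.assoc)
    moreover have "cmod (poly q z) = cmod (poly ((E - 1) * G) z) / (1 + \<theta> ^ K)"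
      unfolding q_def poly_smult norm_mult norm_of_real using \<open>0 \<le> \<theta>\<close> by simp
    ultimately show ?thesis
      using \<open>0 < 1 + \<theta> ^ K\<close> by (simp add: divide_le_eq)
  qed
  moreover have "(1 - \<epsilon>) * cmod (coeff E 1) / 2 \<le> cmod (coeff q 1)"
  proof -
    define t where "t = (1 - (1 - 2*c) ^ K) / (1 + \<theta> ^ K)"
    have "0 \<le> 1 - (1 - 2*c) ^ K"
      using \<open>0 \<le> 1 - 2*c\<close> \<open>0 < c\<close> by (simp add: power_le_one)
    then have "cmod (coeff q 1) = cmod (coeff E 1) * t / 2"
      unfolding q_def coeff_smult G_def coeff_1_cayley_neumann[OF E_0] norm_mult norm_of_real
      using \<open>0 < 1 + \<theta> ^ K\<close> by (simp add: t_def)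
    moreover have "1 - \<epsilon> \<le> t"
      unfolding t_def using \<open>0 \<le> \<theta>\<close> \<open>\<theta> ^ K < \<epsilon> / 2\<close>
      by (intro one_minus_le_divide_one_plus power_mono[OF \<open>1 - 2*c \<le> \<theta>\<close> \<open>0 \<le> 1 - 2*c\<close>]) auto
    ultimately show ?thesis
      using mult_left_mono[OF \<open>1 - \<epsilon> \<le> t\<close>, of "cmod (coeff E 1)"] by (simp add: mult.commute)
  qed
  ultimately show ?thesis by blast
qed

lemma exists_poly_bounded_on_truncated_strip:
  assumes "0 \<le> h" "h < pi/4" "0 < \<epsilon>"
  shows "\<exists>q. (\<forall>z\<in>truncated_strip h \<rho>. cmod (poly q z) \<le> 1) \<and> 1 - \<epsilon> \<le> cmod (coeff q 1)"
proof -
  define \<kappa> where "\<kappa> = exp (-2*\<rho>) * cos (2*h)"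
  have "0 < cos (2*h)"
    using assms by (intro cos_gt_zero_pi) auto
  then have "0 < \<kappa>"
    by (simp add: \<kappa>_def)
  have "\<forall>\<^sub>F N in sequentially. \<forall>w::complex\<in>cball 0 (2*\<rho>). dist (\<Sum>k<N. w ^ k /\<^sub>R fact k) (exp w) < min \<kappa> 1"
    using uniform_limitD[OF uniform_limit_exp_partial_sums, of "min \<kappa> 1" "2*\<rho>"] \<open>0 < \<kappa>\<close> by simp
  then have "\<forall>\<^sub>F N in sequentially. 2 \<le> N \<and>
               (\<forall>w::complex\<in>cball 0 (2*\<rho>). dist (\<Sum>k<N. w ^ k /\<^sub>R fact k) (exp w) < min \<kappa> 1)"
    by (rule eventually_conj[OF eventually_ge_at_top])
  then obtain N where "2 \<le> N"
    and N: "\<forall>w::complex\<in>cball 0 (2*\<rho>). dist (\<Sum>k<N. w ^ k /\<^sub>R fact k) (exp w) < min \<kappa> 1"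
    using eventually_happens'[OF sequentially_bot] by blast
  define E :: "complex poly" where "E = (\<Sum>k<N. monom (of_real (2 ^ k / fact k)) k)"
  have poly_E: "poly E z = (\<Sum>k<N. (2*z) ^ k /\<^sub>R fact k)" for z
    by (simp add: E_def poly_sum poly_monom scaleR_conv_of_real power_mult_distrib divide_inverse mult_ac)
  have "poly E 0 = 1"
    using \<open>2 \<le> N\<close> by (simp add: poly_0_coeff_0 E_def coeff_sum)
  have "coeff E 1 = 2"
    using \<open>2 \<le> N\<close> by (simp add: E_def coeff_sum)
  have E_close: "cmod (exp (2*z) - poly E z) < min \<kappa> 1" if "z \<in> truncated_strip h \<rho>" for z
    using N[rule_format, of "2*z"] that by (simp add: poly_E truncated_strip_def dist_norm norm_minus_commute)
  have Re_E: "0 \<le> Re (poly E z)" if "z \<in> truncated_strip h \<rho>" for z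
  proof -
    have "\<kappa> \<le> Re (exp (2*z))"
      using Re_exp_ge_on_truncated_strip[OF that] assms(2) by (simp add: \<kappa>_def)
    moreover have "Re (exp (2*z)) - Re (poly E z) \<le> cmod (exp (2*z) - poly E z)"
      by (metis complex_Re_le_cmod minus_complex.simps(1))
    moreover have "cmod (exp (2*z) - poly E z) < \<kappa>"
      using E_close[OF that] by simp
    ultimately show ?thesis
      by linarith
  qed
  have norm_E: "cmod (1 + poly E z) \<le> exp (2*\<rho>) + 2" if "z \<in> truncated_strip h \<rho>" for z
  proof -
    have "cmod (exp (2*z)) \<le> exp (2*\<rho>)"
      using complex_Re_le_cmod[of z] that by (simp add: truncated_strip_def)
    moreover have "cmod (poly E z) - cmod (exp (2*z)) \<le> cmod (exp (2*z) - poly E z)"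
      using norm_triangle_ineq2[of "poly E z" "exp (2*z)"] by (simp only: norm_minus_commute)
    moreover have "cmod (exp (2*z) - poly E z) < 1"
      using E_close[OF that] by simp
    moreover have "cmod (1 + poly E z) \<le> 1 + cmod (poly E z)"
      using norm_triangle_ineq[of 1 "poly E z"] by simp
    ultimately show ?thesis
      by linarith
  qed
  obtain q where "\<forall>z\<in>truncated_strip h \<rho>. cmod (poly q z) \<le> 1"
    and "(1 - \<epsilon>) * cmod (coeff E 1) / 2 \<le> cmod (coeff q 1)"
    using cayley_neumann_poly[where S = "truncated_strip h \<rho>", OF \<open>poly E 0 = 1\<close> Re_E norm_E _ assms(3)]
    by auto
  then show ?thesis
    unfolding \<open>coeff E 1 = 2\<close> by auto
qed

lemma A_alpha_entry:
  "A_alpha a $ i $ j = (if i = 1 \<and> j = 1 then 1 else if i = 2 \<and> j = 3 then complex_of_real a else 0)"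
  using exhaust_3[of i] exhaust_3[of j] by (auto simp: A_alpha_def)

lemma mat_pow_A_alpha_entry:
  "mat_pow (A_alpha a) k $ i $ j =
     (if i = 1 \<and> j = 1 then 1 else if i = j then (if k = 0 then 1 else 0)
      else if i = 2 \<and> j = 3 then (if k = 1 then complex_of_real a else 0) else 0)"
proof (induction k arbitrary: i j)
  case 0
  show ?case
    using exhaust_3[of i] exhaust_3[of j] by (elim disjE) (simp_all add: mat_pow_def mat_def)
next
  case (Suc k)
  have "mat_pow (A_alpha a) (Suc k) = A_alpha a ** mat_pow (A_alpha a) k"
    by (simp add: mat_pow_def)
  then show ?case
    using exhaust_3[of i] exhaust_3[of j] by (elim disjE) (simp_all add: matrix_matrix_mult_def Suc.IH sum_3 A_alpha_entry)
qed

lemma sum_coeff_delta: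
  fixes p :: "'a::semiring_0 poly"
  shows "(\<Sum>k\<le>degree p. coeff p k * (if k = m then b else 0)) = coeff p m * b"
  by (cases "m \<le> degree p") (simp_all add: if_distrib coeff_eq_0 cong: if_cong)

lemma poly_mat_A_alpha_entry:
  "poly_mat p (A_alpha a) $ i $ j =
     (if i = 1 \<and> j = 1 then poly p 1 else if i = j then coeff p 0
      else if i = 2 \<and> j = 3 then coeff p 1 * complex_of_real a else 0)"
proof -
  have "poly_mat p (A_alpha a) $ i $ j = (\<Sum>k\<le>degree p. coeff p k * mat_pow (A_alpha a) k $ i $ j)"
    by (simp add: poly_mat_def)
  then show ?thesis
    using exhaust_3[of i] exhaust_3[of j]
    by (elim disjE) (simp_all add: mat_pow_A_alpha_entry poly_altdef sum_coeff_delta)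
qed

lemma norm_axis_1_complex: "norm (axis j (1::complex) :: complex^'n) = 1"
  by (rule norm_Basis) (auto simp: Basis_vec_def Basis_complex_def)

lemma matrix_vector_mult_axis_nth: "(M *v axis j 1) $ i = M $ i $ j"
  by (simp add: matrix_vector_mult_def axis_def if_distrib cong: if_cong)

lemma norm_entry_le_onorm:
  fixes M :: "complex^'n^'m"
  shows "cmod (M $ i $ j) \<le> onorm ((*v) M)"
proof -
  have "cmod (M $ i $ j) \<le> norm (M *v axis j 1)"
    using Finite_Cartesian_Product.norm_nth_le[of "M *v axis j 1" i] by (simp add: matrix_vector_mult_axis_nth)
  also have "\<dots> \<le> onorm ((*v) M)"
    using le_onorm[of "(*v) M" "axis j 1"] by (simp add: norm_axis_1_complex)
  finally show ?thesis .
qed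

lemma diag_entry_mem_num_range: "A $ j $ j \<in> num_range A"
proof -
  have "cinner3 (A *v axis j 1) (axis j 1) = A $ j $ j"
    unfolding cinner3_def matrix_vector_mult_axis_nth by (simp add: axis_def if_distrib cong: if_cong)
  then show ?thesis
    using norm_axis_1_complex[of j] by (auto simp: num_range_def intro!: exI[of _ "axis j 1"])
qed

lemma num_range_A_alpha_subset:
  assumes "0 \<le> a"
  shows "num_range (A_alpha a) \<subseteq> truncated_strip (a/2) (1 + a/2)"
proof
  fix z assume "z \<in> num_range (A_alpha a)"
  then obtain x where "norm x = 1" and z: "z = cinner3 (A_alpha a *v x) x"
    unfolding num_range_def by auto
  have z_eq: "z = x$1 * cnj (x$1) + complex_of_real a * (x$3 * cnj (x$2))"
    by (simp add: z cinner3_def sum_3 matrix_vector_mult_def A_alpha_entry)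
  have norm_sq: "cmod (x$1)^2 + cmod (x$2)^2 + cmod (x$3)^2 = 1"
    using \<open>norm x = 1\<close> by (simp add: norm_vec_def L2_set_def sum_3)
  have "2 * cmod (x$3) * cmod (x$2) \<le> 1"
    using norm_sq sum_squares_bound[of "cmod (x$3)" "cmod (x$2)"] zero_le_power2[of "cmod (x$1)"]
    by linarith
  then have cross: "cmod (x$3 * cnj (x$2)) \<le> 1/2"
    by (simp add: norm_mult)
  have "\<bar>Im z\<bar> \<le> a * cmod (x$3 * cnj (x$2))"
    using abs_Im_le_cmod[of "x$3 * cnj (x$2)"] assms by (simp add: z_eq abs_mult mult_left_mono)
  also have "\<dots> \<le> a/2"
    using mult_left_mono[OF cross assms] by simp
  finally have "\<bar>Im z\<bar> \<le> a/2" .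
  have "cmod z \<le> cmod (x$1)^2 + a * cmod (x$3 * cnj (x$2))"
    using norm_triangle_ineq[of "x$1 * cnj (x$1)" "complex_of_real a * (x$3 * cnj (x$2))"] assms
    by (simp add: z_eq norm_mult power2_eq_square)
  also have "\<dots> \<le> 1 + a/2"
    using norm_sq mult_left_mono[OF cross assms] zero_le_power2[of "cmod (x$2)"] zero_le_power2[of "cmod (x$3)"]
    by linarith
  finally show "z \<in> truncated_strip (a/2) (1 + a/2)"
    using \<open>\<bar>Im z\<bar> \<le> a/2\<close> by (simp add: truncated_strip_def)
qed

lemma op_norm_le_crouzeix_ratio:
  assumes "\<forall>z\<in>num_range A. cmod (poly p z) \<le> 1"
  shows "ereal (op_norm (poly_mat p A)) \<le> crouzeix_ratio A"
  unfolding crouzeix_ratio_def using assms by (intro SUP_upper) simp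

lemma crouzeix_ratio_A_alpha_ge:
  assumes "0 < a" "0 \<le> h" "h < pi/4" "0 < \<epsilon>"
  shows "ereal (2*h*(1 - \<epsilon>)) \<le> crouzeix_ratio (A_alpha a)"
proof -
  define \<beta> where "\<beta> = 2*h/a"
  have "0 \<le> \<beta>" "\<beta> * (a/2) = h" "a * \<beta> = 2*h"
    using assms by (auto simp: \<beta>_def)
  obtain q where q_bounded: "\<forall>z\<in>truncated_strip h (\<beta> * (1 + a/2)). cmod (poly q z) \<le> 1"
    and q_coeff: "1 - \<epsilon> \<le> cmod (coeff q 1)"
    using exists_poly_bounded_on_truncated_strip assms(2-4) by blast
  define p where "p = q \<circ>\<^sub>p [:0, of_real \<beta>:]"
  have "\<forall>z\<in>num_range (A_alpha a). cmod (poly p z) \<le> 1"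
  proof
    fix z assume "z \<in> num_range (A_alpha a)"
    then have "of_real \<beta> * z \<in> truncated_strip h (\<beta> * (1 + a/2))"
      using num_range_A_alpha_subset[of a] scaled_mem_truncated_strip[of z _ _ \<beta>] assms(1)
        \<open>0 \<le> \<beta>\<close> \<open>\<beta> * (a/2) = h\<close> by force
    then show "cmod (poly p z) \<le> 1"
      using q_bounded by (simp add: p_def poly_pcompose mult.commute)
  qed
  then have "ereal (op_norm (poly_mat p (A_alpha a))) \<le> crouzeix_ratio (A_alpha a)"
    by (rule op_norm_le_crouzeix_ratio)
  moreover have "2*h*(1 - \<epsilon>) \<le> op_norm (poly_mat p (A_alpha a))"
  proof -
    have "2*h*(1 - \<epsilon>) \<le> a * \<beta> * cmod (coeff q 1)"
      using q_coeff assms(2) \<open>a * \<beta> = 2*h\<close> by (simp add: mult_left_mono)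
    also have "\<dots> = cmod (poly_mat p (A_alpha a) $ 2 $ 3)"
      using assms(1) \<open>0 \<le> \<beta>\<close> by (simp add: poly_mat_A_alpha_entry p_def coeff_pcompose_linear norm_mult)
    also have "\<dots> \<le> op_norm (poly_mat p (A_alpha a))"
      unfolding op_norm_def by (rule norm_entry_le_onorm)
    finally show ?thesis .
  qed
  ultimately show ?thesis
    by (meson ereal_less_eq(3) order_trans)
qed

lemma crouzeix_ratio_A_alpha_ge_pi_half:
  assumes "0 < a"
  shows "ereal (pi/2) \<le> crouzeix_ratio (A_alpha a)"
proof -
  have "((\<lambda>s. ereal (s^2 * pi/2)) \<longlongrightarrow> ereal (1^2 * pi/2)) (at_left 1)"
    unfolding lim_ereal by (intro tendsto_intros) simp
  moreover have "\<forall>\<^sub>F s in at_left 1. ereal (s^2 * pi/2) \<le> crouzeix_ratio (A_alpha a)"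
    using eventually_at_left_real[OF zero_less_one]
  proof eventually_elim
    case (elim s)
    then have "ereal (2 * (s*pi/4) * (1 - (1 - s))) \<le> crouzeix_ratio (A_alpha a)"
      using assms by (intro crouzeix_ratio_A_alpha_ge) auto
    then show ?case
      by (simp add: power2_eq_square mult_ac)
  qed
  ultimately show ?thesis
    by (intro tendsto_upperbound) auto
qed

lemma op_norm_poly_mat_A_alpha_0_le:
  assumes "cmod (poly p 1) \<le> 1" "cmod (poly p 0) \<le> 1"
  shows "op_norm (poly_mat p (A_alpha 0)) \<le> 1"
  unfolding op_norm_def
proof (rule onorm_le)
  fix x :: "complex^3"
  have "norm ((poly_mat p (A_alpha 0) *v x) $ i) \<le> norm (x $ i)" for i
    using exhaust_3[of i] assms
    by (elim disjE) (simp_all add: matrix_vector_mult_def sum_3 poly_mat_A_alpha_entry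
        poly_0_coeff_0 norm_mult mult_left_le_one_le)
  then show "norm (poly_mat p (A_alpha 0) *v x) \<le> 1 * norm x"
    by (simp add: norm_le_componentwise_cart)
qed

lemma crouzeix_ratio_A_alpha_0: "crouzeix_ratio (A_alpha 0) = 1"
proof (rule antisym)
  show "crouzeix_ratio (A_alpha 0) \<le> 1"
    unfolding crouzeix_ratio_def
  proof (rule SUP_least)
    fix p assume "p \<in> {p. \<forall>z\<in>num_range (A_alpha 0). cmod (poly p z) \<le> 1}"
    moreover have "1 \<in> num_range (A_alpha 0)" "0 \<in> num_range (A_alpha 0)"
      using diag_entry_mem_num_range[of "A_alpha 0" 1] diag_entry_mem_num_range[of "A_alpha 0" 2]
      by (simp_all add: A_alpha_entry)
    ultimately show "ereal (op_norm (poly_mat p (A_alpha 0))) \<le> 1"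
      using op_norm_poly_mat_A_alpha_0_le[of p] by auto
  qed
  have "1 \<le> op_norm (poly_mat 1 (A_alpha 0))"
    using norm_entry_le_onorm[of "poly_mat 1 (A_alpha 0)" 1 1]
    by (simp add: op_norm_def poly_mat_A_alpha_entry)
  then have "ereal 1 \<le> crouzeix_ratio (A_alpha 0)"
    using op_norm_le_crouzeix_ratio[of "A_alpha 0" 1] by (simp add: order_trans[rotated])
  then show "1 \<le> crouzeix_ratio (A_alpha 0)"
    by (simp add: one_ereal_def)
qed

lemma isCont_A_alpha: "isCont A_alpha a"
proof -
  define E :: cmat3 where "E = (\<chi> i j. if i = 2 \<and> j = 3 then 1 else 0)"
  have "A_alpha = (\<lambda>b. A_alpha 0 + b *\<^sub>R E)"
    by (intro ext) (simp add: vec_eq_iff A_alpha_entry E_def flip: of_real_def)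
  then show ?thesis
    by (subst \<open>A_alpha = _\<close>) (intro continuous_intros)
qed

lemma not_isCont_crouzeix_ratio_A_alpha_0: "\<not> isCont crouzeix_ratio (A_alpha 0)"
proof
  assume "isCont crouzeix_ratio (A_alpha 0)"
  moreover have "(A_alpha \<longlongrightarrow> A_alpha 0) (at_right 0)"
    using isCont_A_alpha[of 0] unfolding isCont_def by (rule tendsto_within_subset) simp
  ultimately have "((\<lambda>a. crouzeix_ratio (A_alpha a)) \<longlongrightarrow> crouzeix_ratio (A_alpha 0)) (at_right 0)"
    by (rule isCont_tendsto_compose)
  moreover have "\<forall>\<^sub>F a in at_right 0. ereal (pi/2) \<le> crouzeix_ratio (A_alpha a)"
    using eventually_at_right_less[of 0] by eventually_elim (rule crouzeix_ratio_A_alpha_ge_pi_half)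
  ultimately have "ereal (pi/2) \<le> crouzeix_ratio (A_alpha 0)"
    by (intro tendsto_lowerbound) auto
  then show False
    using crouzeix_ratio_A_alpha_0 pi_gt3 by simp
qed

theorem proposition2p3:
  shows "(\<forall>a::real. a > 0 \<longrightarrow> crouzeix_ratio (A_alpha a) \<ge> ereal (pi / 2))
       \<and> crouzeix_ratio (A_alpha 0) = 1
       \<and> \<not> isCont crouzeix_ratio (A_alpha 0)"
  by (intro conjI allI impI crouzeix_ratio_A_alpha_ge_pi_half crouzeix_ratio_A_alpha_0
      not_isCont_crouzeix_ratio_A_alpha_0)

end
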